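(* Consider qubit decoherence under dynamical decoupling in multi-state telegraph-like noises, defined as follows. A noise is specified by real values $w_1,\dots,w_M$, a transition-rate matrix $\Gamma$ with $\sum_j\Gamma_{jk}=0$ for all $k$, and a stationary probability vector $y(0)$ with $\Gamma y(0)=0$; let $W=\mathrm{diag}(w_1,\dots,w_M)$. A DD sequence of $N\ge1$ ideal $\pi$ pulses is given by $0<\alpha_1<\dots<\alpha_N<1$, with $\alpha_0=0$, $\alpha_{N+1}=1$, $a_n=\alpha_n-\alpha_{n-1}$, satisfying the echo condition $\sum_{n=1}^{N+1}(-1)^{n+1}a_n=0$, and the decoherence function is $$\langle x(t)\rangle=\sum_{j}\Big[e^{[\Gamma+(-1)^N iW]a_{N+1}t}\cdots e^{[\Gamma-iW]a_2 t}\,e^{[\Gamma+iW]a_1 t}\,y(0)\Big]_j .$$ Then no DD sequence (for any number $N$ of pulses) suppresses the decoherence beyond the third order of the short-time expansion: for every such sequence, $1-\langle x(t)\rangle$ is not $O(t^4)$ as $t\to0$ for all multi-state telegraph-like noises, i.e. the decoherence is at least of order $t^3$.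
   Context: Physical setting: a qubit with Hamiltonian $H=S_z w(t)$ where $w(t)$ is a classical random field jumping randomly among the values $w_j$ with probabilities evolving by $\frac{d}{dt}Y_j=\sum_{j'}\Gamma_{jj'}Y_{j'}$; $x=S_x+iS_y$ and $\langle x(t)\rangle$ is its ensemble average, equal to $1$ in the absence of decoherence. Ideal $\pi$ pulses flip the sign of the effective field, producing the stated formula. *)

theory Defs
  imports Complex_Main "HOL-Library.Landau_Symbols"
begin

text \<open>Square M x M matrices are represented as functions nat => nat => 'a,
  only the entries with indices below M being relevant.\<close>

definition mmult :: "nat \<Rightarrow> (nat \<Rightarrow> nat \<Rightarrow> complex) \<Rightarrow> (nat \<Rightarrow> nat \<Rightarrow> complex) \<Rightarrow> nat \<Rightarrow> nat \<Rightarrow> complex" where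
  "mmult M A B = (\<lambda>i j. \<Sum>k<M. A i k * B k j)"

fun mpow :: "nat \<Rightarrow> (nat \<Rightarrow> nat \<Rightarrow> complex) \<Rightarrow> nat \<Rightarrow> nat \<Rightarrow> nat \<Rightarrow> complex" where
  "mpow M A 0 = (\<lambda>i j. if i = j then 1 else 0)"
| "mpow M A (Suc k) = mmult M A (mpow M A k)"

definition mexp :: "nat \<Rightarrow> (nat \<Rightarrow> nat \<Rightarrow> complex) \<Rightarrow> nat \<Rightarrow> nat \<Rightarrow> complex" where
  "mexp M A = (\<lambda>i j. \<Sum>k. mpow M A k i j / of_nat (fact k))"

definition mvec :: "nat \<Rightarrow> (nat \<Rightarrow> nat \<Rightarrow> complex) \<Rightarrow> (nat \<Rightarrow> complex) \<Rightarrow> nat \<Rightarrow> complex" where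
  "mvec M A v = (\<lambda>i. \<Sum>j<M. A i j * v j)"

definition telegraph_noise :: "nat \<Rightarrow> (nat \<Rightarrow> nat \<Rightarrow> real) \<Rightarrow> (nat \<Rightarrow> real) \<Rightarrow> (nat \<Rightarrow> real) \<Rightarrow> bool" where
  "telegraph_noise M \<Gamma> w y0 \<longleftrightarrow>
     M \<ge> 1 \<and>
     (\<forall>k<M. (\<Sum>j<M. \<Gamma> j k) = 0) \<and>
     (\<forall>j<M. \<forall>k<M. j \<noteq> k \<longrightarrow> \<Gamma> j k \<ge> 0) \<and>
     (\<forall>j<M. y0 j \<ge> 0) \<and> (\<Sum>j<M. y0 j) = 1 \<and>
     (\<forall>j<M. (\<Sum>k<M. \<Gamma> j k * y0 k) = 0)"

definition seg_gen :: "(nat \<Rightarrow> nat \<Rightarrow> real) \<Rightarrow> (nat \<Rightarrow> real) \<Rightarrow> nat \<Rightarrow> nat \<Rightarrow> nat \<Rightarrow> complex" where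
  "seg_gen \<Gamma> w n = (\<lambda>i j. complex_of_real (\<Gamma> i j)
      + (if i = j then (-1) ^ (n + 1) * \<i> * complex_of_real (w i) else 0))"

fun dd_state :: "nat \<Rightarrow> (nat \<Rightarrow> nat \<Rightarrow> real) \<Rightarrow> (nat \<Rightarrow> real) \<Rightarrow> (nat \<Rightarrow> real) \<Rightarrow> (nat \<Rightarrow> real) \<Rightarrow> real \<Rightarrow> nat \<Rightarrow> nat \<Rightarrow> complex" where
  "dd_state M \<Gamma> w y0 \<alpha> t 0 = (\<lambda>j. complex_of_real (y0 j))"
| "dd_state M \<Gamma> w y0 \<alpha> t (Suc n) =
     mvec M (mexp M (\<lambda>i j. complex_of_real ((\<alpha> (Suc n) - \<alpha> n) * t) * seg_gen \<Gamma> w (Suc n) i j))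
       (dd_state M \<Gamma> w y0 \<alpha> t n)"

definition coherence :: "nat \<Rightarrow> (nat \<Rightarrow> nat \<Rightarrow> real) \<Rightarrow> (nat \<Rightarrow> real) \<Rightarrow> (nat \<Rightarrow> real) \<Rightarrow> nat \<Rightarrow> (nat \<Rightarrow> real) \<Rightarrow> real \<Rightarrow> complex" where
  "coherence M \<Gamma> w y0 N \<alpha> t = (\<Sum>j<M. dd_state M \<Gamma> w y0 \<alpha> t (N + 1) j)"

end

theory Submission
  imports Defs "HOL-Computational_Algebra.Polynomial" "HOL-Real_Asymp.Real_Asymp"
begin

(* Already the symmetric two-state random telegraph noise (unit switching rate, values +-1)
   defeats every sequence. On each free-evolution segment the generator is c (B - I) with
   B^2 = 0, so its exponential is e^(-c) (I + c B); hence the coherence is e^(-t) U(t) for a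
   polynomial U obtained by composing these affine-in-t maps. Expanding U to third order, the
   echo condition removes the first-order filter term and leaves
   1 - <x(t)> = 2 Q t^3 + O(t^4), where Q = int_0^1 F^2 and F is the integral of the +-1
   modulation function; Q > 0 because F is not identically zero. *)

lemma mpow_shifted_nilpotent:
  fixes A B :: "nat \<Rightarrow> nat \<Rightarrow> complex"
  assumes nil: "\<forall>i<M. \<forall>j<M. mmult M B B i j = 0"
    and A: "\<forall>i<M. \<forall>j<M. A i j = c * (B i j - (if i = j then 1 else 0))"
    and "i < M" "j < M"
  shows "mpow M A k i j = (-c) ^ k * ((if i = j then 1 else 0) - of_nat k * B i j)"
  using assms(3,4)
proof (induction k arbitrary: i j)
  case 0
  then show ?case by simp
next
  case (Suc k)
  let ?\<delta> = "\<lambda>i j. if i = j then 1 else (0::complex)"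
  have "mpow M A (Suc k) i j = (\<Sum>l<M. A i l * mpow M A k l j)"
    by (simp add: mmult_def)
  also have "\<dots> = (\<Sum>l<M. c * (B i l - ?\<delta> i l) * ((-c) ^ k * (?\<delta> l j - of_nat k * B l j)))"
    using A Suc by (intro sum.cong) auto
  also have "\<dots> = c * (-c) ^ k * ((\<Sum>l<M. B i l * ?\<delta> l j) - of_nat k * mmult M B B i j
                   - (\<Sum>l<M. ?\<delta> i l * ?\<delta> l j) + of_nat k * (\<Sum>l<M. ?\<delta> i l * B l j))"
    by (simp add: mmult_def algebra_simps sum.distrib sum_subtractf sum_distrib_left)
  also have "\<dots> = c * (-c) ^ k * (B i j - ?\<delta> i j + of_nat k * B i j)"
  proof -
    have "(\<Sum>l<M. B i l * ?\<delta> l j) = B i j" "(\<Sum>l<M. ?\<delta> i l * B l j) = B i j"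
      "(\<Sum>l<M. ?\<delta> i l * ?\<delta> l j) = ?\<delta> i j"
      using Suc.prems
      by (auto simp: if_distrib[where f="\<lambda>x. _ * x"] if_distrib[where f="\<lambda>x. x * _"] cong: if_cong)
    then show ?thesis using Suc.prems nil by simp
  qed
  also have "\<dots> = (-c) ^ Suc k * (?\<delta> i j - of_nat (Suc k) * B i j)"
    by (simp add: algebra_simps)
  finally show ?case .
qed

lemma exp_series_complex: "(\<lambda>k. x ^ k / of_nat (fact k)) sums exp (x::complex)"
  using exp_converges[of x] by (simp add: scaleR_conv_of_real divide_inverse mult.commute)

lemma exp_series_weighted_complex:
  "(\<lambda>k. of_nat k * x ^ k / of_nat (fact k)) sums (x * exp (x::complex))"
proof -
  have shift: "of_nat (Suc k) * x ^ Suc k / of_nat (fact (Suc k)) = x * (x ^ k / of_nat (fact k))" for k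
  proof -
    have "of_nat (fact (Suc k)) = (of_nat (Suc k) :: complex) * of_nat (fact k)"
      by (simp add: fact_Suc algebra_simps)
    then show ?thesis by (simp del: of_nat_Suc fact_Suc)
  qed
  have "(\<lambda>k. of_nat (Suc k) * x ^ Suc k / of_nat (fact (Suc k))) sums (x * exp x)"
    unfolding shift by (rule sums_mult[OF exp_series_complex])
  then show ?thesis
    using sums_Suc_iff[of "\<lambda>k. of_nat k * x ^ k / of_nat (fact k)"] by simp
qed

lemma mexp_shifted_nilpotent:
  fixes A B :: "nat \<Rightarrow> nat \<Rightarrow> complex"
  assumes nil: "\<forall>i<M. \<forall>j<M. mmult M B B i j = 0"
    and A: "\<forall>i<M. \<forall>j<M. A i j = c * (B i j - (if i = j then 1 else 0))"
    and ij: "i < M" "j < M"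
  shows "mexp M A i j = exp (-c) * ((if i = j then 1 else 0) + c * B i j)"
proof -
  let ?\<delta> = "if i = j then 1 else (0::complex)"
  have term_eq: "mpow M A k i j / of_nat (fact k)
      = ?\<delta> * ((-c) ^ k / of_nat (fact k)) - B i j * (of_nat k * (-c) ^ k / of_nat (fact k))" for k
    unfolding mpow_shifted_nilpotent[OF nil A ij] by (simp add: diff_divide_distrib algebra_simps)
  have "(\<lambda>k. mpow M A k i j / of_nat (fact k)) sums (?\<delta> * exp (-c) - B i j * (-c * exp (-c)))"
    unfolding term_eq by (intro sums_diff sums_mult exp_series_complex exp_series_weighted_complex)
  then have "mexp M A i j = ?\<delta> * exp (-c) - B i j * (-c * exp (-c))"
    unfolding mexp_def by (simp add: sums_iff)
  then show ?thesis by (simp add: algebra_simps)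
qed

lemma poly_bigo_one: "poly p \<in> O[at x within A](\<lambda>_. 1)"
  by (rule bigoI_tendsto[where c = "poly p x"]) (auto intro!: tendsto_eq_intros)

lemma poly_minus_taylor_bigo:
  fixes p :: "real poly"
  shows "(\<lambda>t. poly p t - (\<Sum>k<n. coeff p k * t ^ k)) \<in> O[at 0 within A](\<lambda>t. t ^ n)"
proof (induction n arbitrary: p)
  case 0
  then show ?case by (simp add: poly_bigo_one)
next
  case (Suc n)
  obtain a q where p: "p = pCons a q" by (cases p)
  have "(\<lambda>t. t * (poly q t - (\<Sum>k<n. coeff q k * t ^ k))) \<in> O[at 0 within A](\<lambda>t. t * t ^ n)"
    by (intro landau_o.big.mult landau_o.big_refl Suc.IH)
  moreover have "poly p t - (\<Sum>k<Suc n. coeff p k * t ^ k) = t * (poly q t - (\<Sum>k<n. coeff q k * t ^ k))" for t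
    unfolding p sum.lessThan_Suc_shift by (simp add: sum_distrib_left algebra_simps)
  ultimately show ?case by simp
qed

lemma cubic_notin_bigo_quartic:
  assumes "c \<noteq> 0"
  shows "(\<lambda>t::real. c * t ^ 3) \<notin> O[at_right 0](\<lambda>t. t ^ 4)"
proof
  assume "(\<lambda>t::real. c * t ^ 3) \<in> O[at_right 0](\<lambda>t. t ^ 4)"
  then have "(\<lambda>t::real. t ^ 3) \<in> O[at_right 0](\<lambda>t. t ^ 4)" using assms by simp
  moreover have "(\<lambda>t::real. t ^ 4) \<in> o[at_right 0](\<lambda>t. t ^ 3)" by real_asymp
  ultimately have "eventually (\<lambda>t::real. t ^ 3 = 0) (at_right 0)"
    by (rule landau_o.big_small_asymmetric)
  moreover have "eventually (\<lambda>t::real. t > 0) (at_right 0)" by (rule eventually_at_right_less)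
  ultimately have "eventually (\<lambda>t::real. False) (at_right 0)" by eventually_elim simp
  then show False by simp
qed

lemma one_minus_damped_cubic:
  fixes U :: "real \<Rightarrow> real"
  assumes U: "(\<lambda>t. U t - (1 + t + t ^ 2 / 2 + (1/6 - \<kappa>) * t ^ 3)) \<in> O[at_right 0](\<lambda>t. t ^ 4)"
  shows "(\<lambda>t. 1 - exp (-t) * U t - \<kappa> * t ^ 3) \<in> O[at_right 0](\<lambda>t. t ^ 4)"
proof -
  have exp_taylor: "(\<lambda>t::real. 1 - exp (-t) * (1 + t + t ^ 2 / 2 + t ^ 3 / 6)) \<in> O[at_right 0](\<lambda>t. t ^ 4)"
    by real_asymp
  have "(\<lambda>t::real. t ^ 3 * (exp (-t) - 1)) \<in> O[at_right 0](\<lambda>t. t ^ 4)"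
    by real_asymp
  from landau_o.big.mult[OF bigo_const this]
  have cubic: "(\<lambda>t::real. \<kappa> * (t ^ 3 * (exp (-t) - 1))) \<in> O[at_right 0](\<lambda>t. t ^ 4)"
    by simp
  have "(\<lambda>t::real. exp (-t)) \<in> O[at_right 0](\<lambda>_. 1)"
    by real_asymp
  from landau_o.big.mult[OF this U]
  have rest: "(\<lambda>t. exp (-t) * (U t - (1 + t + t ^ 2 / 2 + (1/6 - \<kappa>) * t ^ 3))) \<in> O[at_right 0](\<lambda>t. t ^ 4)"
    by simp
  from sum_in_bigo(2)[OF sum_in_bigo(1)[OF exp_taylor cubic] rest] show ?thesis
    by (simp add: algebra_simps)
qed

(* With the modulation function f = (-1)^(k+1) on the k-th segment [alpha (k-1), alpha k] and
   F u = int_0^u f, these are F (alpha n), int_0^(alpha n) F and int_0^(alpha n) F^2. *)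
definition mod_int :: "(nat \<Rightarrow> real) \<Rightarrow> nat \<Rightarrow> real" where
  "mod_int \<alpha> n = (\<Sum>k=1..n. (-1) ^ (k + 1) * (\<alpha> k - \<alpha> (k - 1)))"

fun mod_int_int :: "(nat \<Rightarrow> real) \<Rightarrow> nat \<Rightarrow> real" where
  "mod_int_int \<alpha> 0 = 0"
| "mod_int_int \<alpha> (Suc n) = mod_int_int \<alpha> n + (\<alpha> (Suc n) - \<alpha> n) * mod_int \<alpha> n
     + (-1) ^ (n + 2) * (\<alpha> (Suc n) - \<alpha> n) ^ 2 / 2"

fun mod_int_sq :: "(nat \<Rightarrow> real) \<Rightarrow> nat \<Rightarrow> real" where
  "mod_int_sq \<alpha> 0 = 0"
| "mod_int_sq \<alpha> (Suc n) = mod_int_sq \<alpha> n + (\<alpha> (Suc n) - \<alpha> n) * mod_int \<alpha> n ^ 2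
     + (-1) ^ (n + 2) * (\<alpha> (Suc n) - \<alpha> n) ^ 2 * mod_int \<alpha> n + (\<alpha> (Suc n) - \<alpha> n) ^ 3 / 3"

lemma mod_int_Suc:
  "mod_int \<alpha> (Suc n) = mod_int \<alpha> n + (-1) ^ (n + 2) * (\<alpha> (Suc n) - \<alpha> n)"
  by (simp add: mod_int_def)

lemma neg_one_power_cases: "(-1::real) ^ m = 1 \<or> (-1::real) ^ m = -1"
  by (cases "even m") auto

lemma square_integral_increment_pos:
  fixes a F s :: real
  assumes "0 < a" and "s = 1 \<or> s = -1"
  shows "0 < a * F ^ 2 + s * a ^ 2 * F + a ^ 3 / 3"
proof -
  have "a * F ^ 2 + s * a ^ 2 * F + a ^ 3 / 3 = a * ((F + s * a / 2) ^ 2 + a ^ 2 / 12)"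
    using assms(2) by (auto simp: field_simps power2_eq_square power3_eq_cube)
  also have "\<dots> > 0" using assms(1) by (intro mult_pos_pos add_nonneg_pos) auto
  finally show ?thesis .
qed

lemma mod_int_sq_less_Suc:
  assumes "\<alpha> n < \<alpha> (Suc n)"
  shows "mod_int_sq \<alpha> n < mod_int_sq \<alpha> (Suc n)"
  using square_integral_increment_pos[OF _ neg_one_power_cases, of "\<alpha> (Suc n) - \<alpha> n" "mod_int \<alpha> n" "n + 2"] assms
  by simp

lemma mod_int_sq_pos:
  assumes "\<forall>k\<le>n. \<alpha> k < \<alpha> (Suc k)"
  shows "0 < mod_int_sq \<alpha> (Suc n)"
  using assms
proof (induction n)
  case 0
  then show ?case using mod_int_sq_less_Suc[of \<alpha> 0] by simp
next
  case (Suc n)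
  then show ?case using mod_int_sq_less_Suc[of \<alpha> "Suc n"] by simp
qed

(* The two components U, Y of the two-state state after n segments, up to the factor
   e^(-alpha n t) / 2 (see dd_state_rtn below). *)
fun dd_poly :: "(nat \<Rightarrow> real) \<Rightarrow> nat \<Rightarrow> real poly \<times> real poly" where
  "dd_poly \<alpha> 0 = (1, 0)"
| "dd_poly \<alpha> (Suc n) =
     (let u = fst (dd_poly \<alpha> n); y = snd (dd_poly \<alpha> n);
          a = \<alpha> (Suc n) - \<alpha> n; s = (-1) ^ (n + 2)
      in (u + pCons 0 (smult a (u - smult s y)), y + pCons 0 (smult a (smult s u - y))))"

lemma dd_poly_low_coeffs:
  assumes "\<alpha> 0 = 0"
  shows "coeff (fst (dd_poly \<alpha> n)) 0 = 1 \<and> coeff (snd (dd_poly \<alpha> n)) 0 = 0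
    \<and> coeff (fst (dd_poly \<alpha> n)) 1 = \<alpha> n \<and> coeff (snd (dd_poly \<alpha> n)) 1 = mod_int \<alpha> n
    \<and> coeff (fst (dd_poly \<alpha> n)) 2 = (\<alpha> n ^ 2 - mod_int \<alpha> n ^ 2) / 2
    \<and> coeff (snd (dd_poly \<alpha> n)) 2 = \<alpha> n * mod_int \<alpha> n - 2 * mod_int_int \<alpha> n
    \<and> coeff (fst (dd_poly \<alpha> n)) 3 = \<alpha> n ^ 3 / 6 - \<alpha> n * mod_int \<alpha> n ^ 2 / 2
         + 2 * mod_int \<alpha> n * mod_int_int \<alpha> n - 2 * mod_int_sq \<alpha> n"
proof (induction n)
  case 0
  then show ?case using assms by (simp add: mod_int_def)
next
  case (Suc n)
  show ?case
    by (cases "even n"; simp add: Let_def mod_int_Suc coeff_pCons' Suc.IH Suc.IH[unfolded One_nat_def];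
        simp add: field_simps power2_eq_square power3_eq_cube)
qed

definition rtn_rate :: "nat \<Rightarrow> nat \<Rightarrow> real" where
  "rtn_rate i j = (if i < 2 \<and> j < 2 then (if i = j then -1 else 1) else 0)"

definition rtn_value :: "nat \<Rightarrow> real" where
  "rtn_value i = (if i = 0 then 1 else if i = 1 then -1 else 0)"

definition rtn_prob :: "nat \<Rightarrow> real" where
  "rtn_prob i = (if i < 2 then 1/2 else 0)"

lemma sum_lessThan_2: "(\<Sum>j<(2::nat). f j) = f 0 + f 1"
  by (simp add: eval_nat_numeral)

lemma less_2_iff: "(i::nat) < 2 \<longleftrightarrow> i = 0 \<or> i = 1"
  by auto

lemma telegraph_noise_rtn: "telegraph_noise 2 rtn_rate rtn_value rtn_prob"
  unfolding telegraph_noise_def rtn_rate_def rtn_value_def rtn_prob_def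
  by (auto simp: sum_lessThan_2 less_2_iff)

definition rtn_nil :: "complex \<Rightarrow> nat \<Rightarrow> nat \<Rightarrow> complex" where
  "rtn_nil s i j = (if i < 2 \<and> j < 2 then (if i = j then (if i = 0 then s * \<i> else - s * \<i>) else 1) else 0)"

lemma seg_gen_rtn:
  "i < 2 \<Longrightarrow> j < 2 \<Longrightarrow>
     seg_gen rtn_rate rtn_value n i j = rtn_nil ((-1) ^ (n + 1)) i j - (if i = j then 1 else 0)"
  unfolding seg_gen_def rtn_rate_def rtn_value_def rtn_nil_def by (auto simp: less_2_iff)

lemma rtn_nil_square: "s * s = 1 \<Longrightarrow> \<forall>i<2. \<forall>j<2. mmult 2 (rtn_nil s) (rtn_nil s) i j = 0"
  unfolding mmult_def rtn_nil_def sum_lessThan_2 by (auto simp: less_2_iff algebra_simps)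

lemma rtn_segment_action:
  fixes e E U Y c s :: real
  assumes "s = 1 \<or> s = -1" and "j < 2"
  shows "(\<Sum>l<2. (complex_of_real e * ((if j = l then 1 else 0) + complex_of_real c * rtn_nil (complex_of_real s) j l))
           * (complex_of_real E / 2 * (complex_of_real U + (if l = 0 then 1 else -1) * \<i> * complex_of_real Y)))
   = complex_of_real (e * E) / 2 * (complex_of_real (U + c * (U - s * Y))
        + (if j = 0 then 1 else -1) * \<i> * complex_of_real (Y + c * (s * U - Y)))"
  using assms unfolding sum_lessThan_2 rtn_nil_def
  by (auto simp: less_2_iff complex_eq_iff algebra_simps)

lemma dd_state_rtn:
  assumes "\<alpha> 0 = 0" and "j < 2"
  shows "dd_state 2 rtn_rate rtn_value rtn_prob \<alpha> t n j
    = complex_of_real (exp (- (\<alpha> n * t))) / 2 * (complex_of_real (poly (fst (dd_poly \<alpha> n)) t)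
        + (if j = 0 then 1 else -1) * \<i> * complex_of_real (poly (snd (dd_poly \<alpha> n)) t))"
  using assms(2)
proof (induction n arbitrary: j)
  case 0
  then show ?case by (simp add: assms(1) rtn_prob_def)
next
  case (Suc n)
  define c where "c = (\<alpha> (Suc n) - \<alpha> n) * t"
  define s where "s = (-1::real) ^ (n + 2)"
  define U where "U = poly (fst (dd_poly \<alpha> n)) t"
  define Y where "Y = poly (snd (dd_poly \<alpha> n)) t"
  define A where "A = (\<lambda>i j. complex_of_real c * seg_gen rtn_rate rtn_value (Suc n) i j)"
  have s: "s = 1 \<or> s = -1" unfolding s_def by (rule neg_one_power_cases)
  then have ss: "complex_of_real s * complex_of_real s = 1" by auto
  have A: "\<forall>i<2. \<forall>j<2. A i j = complex_of_real c * (rtn_nil (complex_of_real s) i j - (if i = j then 1 else 0))"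
    unfolding A_def s_def by (simp add: seg_gen_rtn)
  have "dd_state 2 rtn_rate rtn_value rtn_prob \<alpha> t (Suc n) j
      = (\<Sum>l<2. mexp 2 A j l * dd_state 2 rtn_rate rtn_value rtn_prob \<alpha> t n l)"
    by (simp add: mvec_def A_def c_def)
  also have "\<dots> = (\<Sum>l<2. (complex_of_real (exp (-c)) * ((if j = l then 1 else 0)
        + complex_of_real c * rtn_nil (complex_of_real s) j l))
      * (complex_of_real (exp (- (\<alpha> n * t))) / 2 * (complex_of_real (poly (fst (dd_poly \<alpha> n)) t)
        + (if l = 0 then 1 else -1) * \<i> * complex_of_real (poly (snd (dd_poly \<alpha> n)) t))))"
    using Suc mexp_shifted_nilpotent[OF rtn_nil_square[OF ss] A] by (intro sum.cong) (auto simp: exp_of_real[symmetric])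
  also have "\<dots> = complex_of_real (exp (-c) * exp (- (\<alpha> n * t))) / 2
      * (complex_of_real (poly (fst (dd_poly \<alpha> (Suc n))) t)
        + (if j = 0 then 1 else -1) * \<i> * complex_of_real (poly (snd (dd_poly \<alpha> (Suc n))) t))"
  proof -
    have "poly (fst (dd_poly \<alpha> (Suc n))) t = U + c * (U - s * Y)"
      "poly (snd (dd_poly \<alpha> (Suc n))) t = Y + c * (s * U - Y)"
      by (simp_all add: Let_def U_def Y_def c_def s_def algebra_simps)
    then show ?thesis
      by (simp only: U_def[symmetric] Y_def[symmetric] rtn_segment_action[OF s Suc.prems])
  qed
  also have "exp (-c) * exp (- (\<alpha> n * t)) = exp (- (\<alpha> (Suc n) * t))"
    by (simp add: c_def mult_exp_exp algebra_simps)
  finally show ?case .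
qed

lemma coherence_rtn:
  assumes "\<alpha> 0 = 0" and "\<alpha> (N + 1) = 1"
  shows "coherence 2 rtn_rate rtn_value rtn_prob N \<alpha> t
    = complex_of_real (exp (-t) * poly (fst (dd_poly \<alpha> (N + 1))) t)"
  unfolding coherence_def sum_lessThan_2 using assms
  by (simp add: dd_state_rtn complex_eq_iff del: dd_state.simps)

lemma rtn_decoherence_cubic:
  assumes "\<alpha> 0 = 0" and "\<alpha> n = 1" and "mod_int \<alpha> n = 0"
  shows "(\<lambda>t. 1 - exp (-t) * poly (fst (dd_poly \<alpha> n)) t - 2 * mod_int_sq \<alpha> n * t ^ 3)
           \<in> O[at_right 0](\<lambda>t. t ^ 4)"
proof (rule one_minus_damped_cubic)
  let ?u = "fst (dd_poly \<alpha> n)"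
  have "(\<Sum>k<4. coeff ?u k * t ^ k) = 1 + t + t ^ 2 / 2 + (1/6 - 2 * mod_int_sq \<alpha> n) * t ^ 3" for t
  proof -
    have c: "coeff ?u 0 = 1" "coeff ?u 1 = 1" "coeff ?u 2 = 1/2" "coeff ?u 3 = 1/6 - 2 * mod_int_sq \<alpha> n"
      using dd_poly_low_coeffs[of \<alpha> n, OF assms(1)] assms(2,3) by simp_all
    show ?thesis by (simp add: c c(2)[unfolded One_nat_def] lessThan_nat_numeral power2_eq_square algebra_simps)
  qed
  with poly_minus_taylor_bigo[of ?u 4 "{0<..}"]
  show "(\<lambda>t. poly ?u t - (1 + t + t ^ 2 / 2 + (1/6 - 2 * mod_int_sq \<alpha> n) * t ^ 3))
          \<in> O[at_right 0](\<lambda>t. t ^ 4)"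
    by simp
qed

theorem corollary1:
  fixes N :: nat and \<alpha> :: "nat \<Rightarrow> real"
  assumes "N \<ge> 1"
    and "\<alpha> 0 = 0" and "\<alpha> (N + 1) = 1"
    and "\<forall>n\<le>N. \<alpha> n < \<alpha> (Suc n)"
    and "(\<Sum>n=1..N+1. (-1) ^ (n + 1) * (\<alpha> n - \<alpha> (n - 1))) = 0"
  shows "\<exists>M \<Gamma> w y0. telegraph_noise M \<Gamma> w y0 \<and>
           (\<lambda>t. 1 - coherence M \<Gamma> w y0 N \<alpha> t) \<notin> O[at_right 0](\<lambda>t. complex_of_real (t ^ 4))"
proof (intro exI conjI notI)
  show "telegraph_noise 2 rtn_rate rtn_value rtn_prob" by (rule telegraph_noise_rtn)
  let ?g = "\<lambda>t. 1 - exp (-t) * poly (fst (dd_poly \<alpha> (N + 1))) t"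
  let ?\<kappa> = "2 * mod_int_sq \<alpha> (N + 1)"
  assume "(\<lambda>t. 1 - coherence 2 rtn_rate rtn_value rtn_prob N \<alpha> t) \<in> O[at_right 0](\<lambda>t. complex_of_real (t ^ 4))"
  then have "(\<lambda>t. complex_of_real (?g t)) \<in> O[at_right 0](\<lambda>t. complex_of_real (t ^ 4))"
    by (simp add: coherence_rtn[OF assms(2,3)])
  then have g: "?g \<in> O[at_right 0](\<lambda>t. t ^ 4)"
    by (rule landau_o.big.of_real_cancel)
  have "(\<lambda>t. ?g t - ?\<kappa> * t ^ 3) \<in> O[at_right 0](\<lambda>t. t ^ 4)"
    using rtn_decoherence_cubic[OF assms(2,3)] assms(5) by (simp add: mod_int_def)
  from sum_in_bigo(2)[OF g this] have "(\<lambda>t. ?\<kappa> * t ^ 3) \<in> O[at_right 0](\<lambda>t. t ^ 4)"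
    by simp
  moreover have "?\<kappa> \<noteq> 0" using mod_int_sq_pos[OF assms(4)] by simp
  ultimately show False using cubic_notin_bigo_quartic by blast
qed

end
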